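(* For every positive integer $n$, the Bell number $\mathrm{B}_n$ satisfies \[ \mathrm{B}_n=\sum_{k=1}^n(-1)^{n-k}\Biggl[\sum_{\ell=1}^{k}L(k,\ell)\Biggr]S(n,k), \] where $L(k,\ell)$ are the Lah numbers and $S(n,k)$ are the Stirling numbers of the second kind.
   Context: The Bell numbers $\mathrm{B}_n$ ($n\ge 0$) are defined by the generating function $e^{e^x-1}=\sum_{k=0}^\infty \mathrm{B}_k\frac{x^k}{k!}$; $\mathrm{B}_n$ is the number of partitions of an $n$-element set into nonempty subsets. The Stirling numbers of the second kind are $S(n,k)=\frac1{k!}\sum_{i=0}^k(-1)^i\binom{k}{i}(k-i)^n$, equivalently the number of partitions of an $n$-element set into $k$ nonempty subsets. The Lah numbers are $L(n,k)=\binom{n-1}{k-1}\frac{n!}{k!}$ for $n\ge k\ge 1$, equivalently the number of partitions of an $n$-element set into $k$ nonempty linearly ordered subsets. *)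

theory Defs
  imports "HOL-Combinatorics.Stirling" "HOL-Library.Disjoint_Sets"
begin

definition Bell :: "nat \<Rightarrow> nat" where
  "Bell n = card {P. partition_on {..<n} P}"

text \<open>Lah numbers L(n,k) = binom(n-1,k-1) n!/k!, for n \<ge> k \<ge> 1 (exact division).\<close>
definition Lah :: "nat \<Rightarrow> nat \<Rightarrow> nat" where
  "Lah n k = ((n - 1) choose (k - 1)) * fact n div fact k"

end

theory Submission
  imports Defs
begin

text \<open>
  Grouping the partitions of an \<open>n\<close>-set by their number of blocks gives
  \<open>B\<^sub>n = \<Sum>\<^sub>l S(n,l)\<close>. It therefore suffices to show the inversion formula
  \<open>\<Sum>\<^sub>k (-1)\<^bsup>n-k\<^esup> S(n,k) L(k,l) = S(n,l)\<close>: its left-hand side satisfies the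
  triangular recurrence of the Stirling numbers \<open>S(n+1,l+1) = (l+1) S(n,l+1) + S(n,l)\<close>,
  as one sees by combining that recurrence with the Lah recurrence
  \<open>L(k+1,l+1) = (k+l+1) L(k,l+1) + L(k,l)\<close>.
\<close>

lemma partition_on_Diff_block:
  assumes "partition_on A P" "p \<in> P"
  shows "partition_on (A - p) (P - {p})"
proof -
  have "disjnt p (\<Union>(P - {p}))"
    using assms by (auto simp: partition_on_def disjnt_def pairwise_def)
  moreover have "insert p (P - {p}) = P" using assms(2) by blast
  ultimately show ?thesis using partition_on_insert[of p "P - {p}" A] assms(1) by simp
qed

lemma partition_on_insert_block:
  assumes "partition_on A P" "p \<inter> A = {}" "p \<noteq> {}"
  shows "partition_on (p \<union> A) (insert p P)"
  using assms partition_on_insert[of p P "p \<union> A"]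
  by (auto simp: partition_on_def disjnt_def Diff_triv Int_commute)

definition partitions_into :: "'a set \<Rightarrow> nat \<Rightarrow> 'a set set set" where
  "partitions_into A k = {P. partition_on A P \<and> card P = k}"

lemma finite_partitions_into: "finite A \<Longrightarrow> finite (partitions_into A k)"
  unfolding partitions_into_def
  by (rule finite_subset[OF _ finitely_many_partition_on]) auto

lemma partitions_into_singleton_block:
  assumes "finite A" "a \<notin> A"
  shows "{P \<in> partitions_into (insert a A) (Suc k). {a} \<in> P} = insert {a} ` partitions_into A k"
proof (intro equalityI subsetI)
  fix P assume "P \<in> {P \<in> partitions_into (insert a A) (Suc k). {a} \<in> P}"
  then have P: "partition_on (insert a A) P" "card P = Suc k" "{a} \<in> P"
    by (auto simp: partitions_into_def)
  have "partition_on A (P - {{a}})"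
    using partition_on_Diff_block[OF P(1,3)] assms(2) by simp
  moreover have "card (P - {{a}}) = k"
    using P finite_elements[OF _ P(1)] assms(1) by simp
  moreover have "P = insert {a} (P - {{a}})" using P(3) by blast
  ultimately show "P \<in> insert {a} ` partitions_into A k"
    unfolding partitions_into_def by blast
next
  fix P assume "P \<in> insert {a} ` partitions_into A k"
  then obtain Q where Q: "partition_on A Q" "card Q = k" and P: "P = insert {a} Q"
    by (auto simp: partitions_into_def)
  have "{a} \<notin> Q" using Q(1) assms(2) by (auto simp: partition_on_def)
  then have "card P = Suc k" using P Q finite_elements[OF assms(1) Q(1)] by simp
  moreover have "partition_on (insert a A) P"
    using partition_on_insert_block[OF Q(1), of "{a}"] assms(2) P by simp
  ultimately show "P \<in> {P \<in> partitions_into (insert a A) (Suc k). {a} \<in> P}"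
    using P by (simp add: partitions_into_def)
qed

lemma card_partitions_into_singleton_block:
  assumes "finite A" "a \<notin> A"
  shows "card {P \<in> partitions_into (insert a A) (Suc k). {a} \<in> P} = card (partitions_into A k)"
proof -
  have "inj_on (insert {a}) (partitions_into A k)"
  proof (rule inj_onI)
    fix Q Q' assume "Q \<in> partitions_into A k" "Q' \<in> partitions_into A k" "insert {a} Q = insert {a} Q'"
    moreover from calculation have "{a} \<notin> Q" "{a} \<notin> Q'"
      using assms(2) by (auto simp: partitions_into_def partition_on_def)
    ultimately show "Q = Q'" by (metis insert_ident)
  qed
  then show ?thesis by (simp add: partitions_into_singleton_block[OF assms] card_image)
qed

lemma partitions_into_non_singleton_block:
  assumes "finite A" "a \<notin> A"
  shows "{P \<in> partitions_into (insert a A) (Suc k). {a} \<notin> P}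
       = (\<lambda>(Q, q). insert (insert a q) (Q - {q})) ` Sigma (partitions_into A (Suc k)) id"
proof (intro equalityI subsetI)
  fix P assume "P \<in> {P \<in> partitions_into (insert a A) (Suc k). {a} \<notin> P}"
  then have P: "partition_on (insert a A) P" "card P = Suc k" "{a} \<notin> P"
    by (auto simp: partitions_into_def)
  obtain b where b: "b \<in> P" "a \<in> b" using partition_onD1[OF P(1)] by blast
  define q where "q = b - {a}"
  have b_eq: "b = insert a q" using b(2) by (auto simp: q_def)
  have "q \<noteq> {}"
  proof
    assume "q = {}"
    then show False using b P(3) by (simp add: b_eq)
  qed
  have "q \<subseteq> A" using partition_onD1[OF P(1)] b(1) by (auto simp: q_def)
  have rest: "partition_on (A - q) (P - {b})"
    using partition_on_Diff_block[OF P(1) b(1)] assms(2) by (simp add: b_eq)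
  then have "q \<notin> P - {b}"
    using \<open>q \<noteq> {}\<close> by (auto dest: partition_onD1)
  define Q where "Q = insert q (P - {b})"
  have "partition_on A Q"
    using partition_on_insert_block[OF rest, of q] \<open>q \<noteq> {}\<close> \<open>q \<subseteq> A\<close>
    by (simp add: Q_def Un_absorb1 Un_Diff_cancel)
  moreover have "card Q = Suc k"
    using \<open>q \<notin> P - {b}\<close> P(2) b(1) finite_elements[OF _ P(1)] assms(1) by (simp add: Q_def)
  ultimately have "(Q, q) \<in> Sigma (partitions_into A (Suc k)) id"
    by (simp add: partitions_into_def Q_def)
  moreover have "P = insert (insert a q) (Q - {q})"
    using \<open>q \<notin> P - {b}\<close> b(1) by (auto simp: Q_def b_eq[symmetric])
  ultimately show "P \<in> (\<lambda>(Q, q). insert (insert a q) (Q - {q})) ` Sigma (partitions_into A (Suc k)) id"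
    by (auto intro!: image_eqI[where x = "(Q, q)"])
next
  fix P assume "P \<in> (\<lambda>(Q, q). insert (insert a q) (Q - {q})) ` Sigma (partitions_into A (Suc k)) id"
  then obtain Q q where Q: "partition_on A Q" "card Q = Suc k" "q \<in> Q"
    and P: "P = insert (insert a q) (Q - {q})" by (auto simp: partitions_into_def)
  have "q \<subseteq> A" "q \<noteq> {}" using Q by (auto simp: partition_on_def)
  have rest: "partition_on (A - q) (Q - {q})" by (rule partition_on_Diff_block[OF Q(1,3)])
  have a_notin: "a \<notin> p" if "p \<in> Q" for p using that Q(1) assms(2) by (auto dest: partition_onD1)
  have "insert a q \<union> (A - q) = insert a A" using \<open>q \<subseteq> A\<close> by blast
  then have "partition_on (insert a A) P"
    using partition_on_insert_block[OF rest, of "insert a q"] assms(2) by (auto simp: P)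
  moreover have "card P = Suc k"
    using Q a_notin finite_elements[OF assms(1) Q(1)] by (auto simp: P card_insert_if)
  moreover have "{a} \<notin> P"
    using a_notin \<open>q \<noteq> {}\<close> Q(3) by (auto simp: P)
  ultimately show "P \<in> {P \<in> partitions_into (insert a A) (Suc k). {a} \<notin> P}"
    by (simp add: partitions_into_def)
qed

lemma card_partitions_into_non_singleton_block:
  assumes "finite A" "a \<notin> A"
  shows "card {P \<in> partitions_into (insert a A) (Suc k). {a} \<notin> P}
       = Suc k * card (partitions_into A (Suc k))"
proof -
  let ?f = "\<lambda>(Q, q). insert (insert a q) (Q - {q})"
  have "inj_on ?f (Sigma (partitions_into A (Suc k)) id)"
  proof (rule inj_onI, clarsimp)
    fix Q q Q' q'
    assume Q: "Q \<in> partitions_into A (Suc k)" "q \<in> Q"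
      and Q': "Q' \<in> partitions_into A (Suc k)" "q' \<in> Q'"
      and eq: "insert (insert a q) (Q - {q}) = insert (insert a q') (Q' - {q'})"
    have a_notin: "a \<notin> \<Union>Q" "a \<notin> \<Union>Q'"
      using Q(1) Q'(1) assms(2) by (auto simp: partitions_into_def dest: partition_onD1)
    have "insert a q \<in> insert (insert a q') (Q' - {q'})" using eq by blast
    then have "insert a q = insert a q'" using a_notin(2) by blast
    moreover have "a \<notin> q" "a \<notin> q'" using a_notin Q(2) Q'(2) by blast+
    ultimately have "q = q'" by (metis Diff_insert_absorb)
    have "insert a q \<notin> Q - {q}" "insert a q' \<notin> Q' - {q'}" using a_notin by blast+
    then have "Q - {q} = Q' - {q'}"
      using eq \<open>insert a q = insert a q'\<close> by (metis Diff_insert_absorb)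
    then show "Q = Q' \<and> q = q'" using \<open>q = q'\<close> Q(2) Q'(2) by (metis insert_Diff)
  qed
  moreover have "card (Sigma (partitions_into A (Suc k)) id) = Suc k * card (partitions_into A (Suc k))"
    using finite_partitions_into[OF assms(1)]
    by (subst card_SigmaI) (auto simp: partitions_into_def intro: card_ge_0_finite)
  ultimately show ?thesis
    by (simp add: partitions_into_non_singleton_block[OF assms] card_image)
qed

lemma card_partitions_into_insert:
  assumes "finite A" "a \<notin> A"
  shows "card (partitions_into (insert a A) (Suc k))
       = Suc k * card (partitions_into A (Suc k)) + card (partitions_into A k)"
proof -
  have "partitions_into (insert a A) (Suc k)
      = {P \<in> partitions_into (insert a A) (Suc k). {a} \<in> P}
      \<union> {P \<in> partitions_into (insert a A) (Suc k). {a} \<notin> P}" by blast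
  also have "card \<dots> = card {P \<in> partitions_into (insert a A) (Suc k). {a} \<in> P}
      + card {P \<in> partitions_into (insert a A) (Suc k). {a} \<notin> P}"
    using finite_partitions_into[of "insert a A" "Suc k"] assms(1)
    by (intro card_Un_disjoint) auto
  also have "\<dots> = Suc k * card (partitions_into A (Suc k)) + card (partitions_into A k)"
    using card_partitions_into_singleton_block[OF assms]
      card_partitions_into_non_singleton_block[OF assms] by simp
  finally show ?thesis .
qed

lemma card_partitions_into:
  "finite A \<Longrightarrow> card (partitions_into A k) = Stirling (card A) k"
proof (induction A arbitrary: k rule: finite_induct)
  case empty
  have "partitions_into ({} :: 'a set) k = (if k = 0 then {{}} else {})"
    by (auto simp: partitions_into_def partition_on_empty)
  then show ?case by (cases k) simp_all
next
  case (insert a A)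
  show ?case
  proof (cases k)
    case 0
    have "P = {}" if "partition_on (insert a A) P" "card P = 0" for P
      using that finite_elements insert(1) by (metis card_0_eq finite.insertI)
    then have "partitions_into (insert a A) 0 = {}"
      by (auto simp: partitions_into_def dest: partition_onD1)
    then show ?thesis using 0 insert(1,2) by simp
  next
    case (Suc j)
    then show ?thesis using insert by (simp add: card_partitions_into_insert)
  qed
qed

lemma card_partition_on_le:
  assumes "finite A" "partition_on A P"
  shows "card P \<le> card A"
proof -
  have "card P = (\<Sum>p\<in>P. 1)" by simp
  also have "\<dots> \<le> (\<Sum>p\<in>P. card p)"
    using assms by (intro sum_mono)
      (auto simp: Suc_le_eq card_gt_0_iff partition_on_def intro: finite_subset)
  also have "\<dots> = card A"
    using assms by (intro product_partition[symmetric]) (auto dest: partition_onD1 intro: finite_subset)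
  finally show ?thesis .
qed

lemma Bell_eq_sum_Stirling: "Bell n = (\<Sum>k\<le>n. Stirling n k)"
proof -
  have "{P. partition_on {..<n} P} = (\<Union>k\<le>n. partitions_into {..<n} k)"
    using card_partition_on_le[of "{..<n}"] by (auto simp: partitions_into_def)
  then have "Bell n = (\<Sum>k\<le>n. card (partitions_into {..<n} k))"
    unfolding Bell_def
    by (simp only:) (rule card_UN_disjoint, auto simp: finite_partitions_into, auto simp: partitions_into_def)
  then show ?thesis by (simp add: card_partitions_into)
qed

text \<open>The closed form \<open>Lah\<close> is only meaningful for \<open>l \<ge> 1\<close>
  (truncated subtraction makes \<open>Lah k 0 = k!\<close>), so the inversion formula is proved
  for the recursively defined triangle and transferred afterwards.\<close>

fun Lah_rec :: "nat \<Rightarrow> nat \<Rightarrow> nat" where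
  "Lah_rec 0 0 = 1"
| "Lah_rec 0 (Suc l) = 0"
| "Lah_rec (Suc k) 0 = 0"
| "Lah_rec (Suc k) (Suc l) = (k + Suc l) * Lah_rec k (Suc l) + Lah_rec k l"

lemma Lah_rec_less: "k < l \<Longrightarrow> Lah_rec k l = 0"
  by (induction k l rule: Lah_rec.induct) auto

lemma binomial_Lah_step:
  "(Suc j + Suc (Suc m)) * (j choose Suc m) + Suc (Suc m) * (j choose m)
     = Suc (Suc j) * (Suc j choose Suc m)"
proof (cases "m \<le> j")
  case True
  have "Suc m * (j choose Suc m) = (j - m) * (j choose m)"
    using binomial_absorption[of m j] binomial_absorb_comp[of j m] by simp
  then have "Suc m * (j choose Suc m) + m * (j choose m) = j * (j choose m)"
    using True by (simp add: add_mult_distrib[symmetric])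
  then show ?thesis by (simp add: algebra_simps)
next
  case False
  then show ?thesis by (simp add: binomial_eq_0)
qed

lemma Lah_rec_mult_fact:
  "Lah_rec (Suc j) (Suc m) * fact (Suc m) = (j choose m) * fact (Suc j)"
proof (induction j arbitrary: m)
  case 0
  then show ?case by (cases m) auto
next
  case (Suc j)
  show ?case
  proof (cases m)
    case 0
    then show ?thesis using Suc.IH[of 0] by (simp add: algebra_simps)
  next
    case (Suc m')
    have "Lah_rec (Suc (Suc j)) (Suc m) * fact (Suc m)
        = (Suc j + Suc m) * (Lah_rec (Suc j) (Suc m) * fact (Suc m))
          + Suc m * (Lah_rec (Suc j) (Suc m') * fact (Suc m'))"
      by (simp add: Suc algebra_simps)
    also have "\<dots> = ((Suc j + Suc m) * (j choose m) + Suc m * (j choose m')) * fact (Suc j)"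
      by (simp only: Suc.IH) (simp add: algebra_simps)
    also have "(Suc j + Suc m) * (j choose m) + Suc m * (j choose m') = Suc (Suc j) * (Suc j choose m)"
      using binomial_Lah_step[of j m'] by (simp add: Suc)
    finally show ?thesis by (simp add: algebra_simps)
  qed
qed

lemma Lah_eq_Lah_rec:
  assumes "k \<ge> 1" "l \<ge> 1"
  shows "Lah k l = Lah_rec k l"
proof -
  obtain j m where k: "k = Suc j" and l: "l = Suc m"
    using assms by (metis Suc_le_D One_nat_def)
  have "Lah k l = Lah_rec k l * fact (Suc m) div fact (Suc m)"
    unfolding Lah_def k l diff_Suc_1 Lah_rec_mult_fact ..
  then show ?thesis by simp
qed

lemma alternating_sum_shift:
  fixes f :: "nat \<Rightarrow> 'a :: comm_ring_1"
  assumes "f 0 = 0" "f (Suc n) = 0"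
  shows "(\<Sum>k\<le>n. (-1) ^ (n - k) * f (Suc k)) = - (\<Sum>k\<le>n. (-1) ^ (n - k) * f k)"
proof -
  let ?g = "\<lambda>k. (-1) ^ (Suc n - k) * f k"
  have "(\<Sum>k\<le>n. (-1) ^ (n - k) * f (Suc k)) = ?g 0 + (\<Sum>k\<le>n. ?g (Suc k))"
    using assms(1) by simp
  also have "\<dots> = (\<Sum>k\<le>Suc n. ?g k)"
    by (rule sum.atMost_Suc_shift[symmetric])
  also have "\<dots> = (\<Sum>k\<le>n. ?g k) + ?g (Suc n)"
    by (rule sum.atMost_Suc)
  also have "\<dots> = (\<Sum>k\<le>n. - ((-1) ^ (n - k) * f k))"
    using assms(2) by (simp add: Suc_diff_le)
  finally show ?thesis by (simp add: sum_negf)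
qed

definition alt_Stirling_Lah :: "nat \<Rightarrow> nat \<Rightarrow> int" where
  "alt_Stirling_Lah n l = (\<Sum>k\<le>n. (-1) ^ (n - k) * int (Stirling n k) * int (Lah_rec k l))"

lemma alt_Stirling_Lah_Suc:
  "alt_Stirling_Lah (Suc n) l
     = (\<Sum>k\<le>n. (-1) ^ (n - k) * (int (Suc k) * int (Stirling n (Suc k)) + int (Stirling n k))
                 * int (Lah_rec (Suc k) l))"
  unfolding alt_Stirling_Lah_def by (subst sum.atMost_Suc_shift) (simp add: algebra_simps)

lemma alt_Stirling_Lah_Suc_Suc:
  "alt_Stirling_Lah (Suc n) (Suc m) = int (Suc m) * alt_Stirling_Lah n (Suc m) + alt_Stirling_Lah n m"
proof -
  let ?s = "\<lambda>k. (-1::int) ^ (n - k) * int (Stirling n k)"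
  have "(\<Sum>k\<le>n. (-1) ^ (n - k) * (int (Suc k) * int (Stirling n (Suc k))) * int (Lah_rec (Suc k) (Suc m)))
      = - (\<Sum>k\<le>n. ?s k * (int k * int (Lah_rec k (Suc m))))"
    using alternating_sum_shift[of "\<lambda>k. int k * int (Stirling n k) * int (Lah_rec k (Suc m))" n]
    by (simp add: algebra_simps)
  moreover have "(\<Sum>k\<le>n. ?s k * int (Lah_rec (Suc k) (Suc m)))
      = (\<Sum>k\<le>n. ?s k * (int (k + Suc m) * int (Lah_rec k (Suc m)) + int (Lah_rec k m)))"
    by (simp add: algebra_simps)
  ultimately have "alt_Stirling_Lah (Suc n) (Suc m)
      = (\<Sum>k\<le>n. ?s k * (int (Suc m) * int (Lah_rec k (Suc m)) + int (Lah_rec k m)))"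
    unfolding alt_Stirling_Lah_Suc
    by (simp add: algebra_simps sum.distrib sum_subtractf[symmetric])
  then show ?thesis
    by (simp add: alt_Stirling_Lah_def algebra_simps sum.distrib sum_distrib_left)
qed

lemma alt_Stirling_Lah_eq_Stirling: "alt_Stirling_Lah n l = int (Stirling n l)"
proof (induction n arbitrary: l)
  case 0
  then show ?case by (cases l) (simp_all add: alt_Stirling_Lah_def)
next
  case (Suc n)
  show ?case
  proof (cases l)
    case 0
    then show ?thesis by (simp add: alt_Stirling_Lah_Suc)
  next
    case (Suc m)
    then show ?thesis by (simp only: alt_Stirling_Lah_Suc_Suc Suc.IH) (simp add: algebra_simps)
  qed
qed

lemma sum_Lah_eq_sum_Lah_rec:
  assumes "1 \<le> k" "k \<le> n"
  shows "(\<Sum>l=1..k. Lah k l) = (\<Sum>l\<le>n. Lah_rec k l)"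
proof -
  have "(\<Sum>l=1..k. Lah k l) = (\<Sum>l=1..k. Lah_rec k l)"
    using assms(1) by (intro sum.cong) (auto simp: Lah_eq_Lah_rec)
  also have "\<dots> = (\<Sum>l=0..k. Lah_rec k l)"
    using assms(1) by (cases k) (simp_all add: sum.atLeast_Suc_atMost[of 0])
  also have "\<dots> = (\<Sum>l\<le>n. Lah_rec k l)"
    using assms(2) by (intro sum.mono_neutral_left) (auto simp: Lah_rec_less)
  finally show ?thesis .
qed

theorem theorem1:
  fixes n :: nat
  assumes "n \<ge> 1"
  shows "int (Bell n) =
    (\<Sum>k=1..n. (-1) ^ (n - k) * int (\<Sum>l=1..k. Lah k l) * int (Stirling n k))"
proof -
  have Stirling_n_0: "Stirling n 0 = 0" using assms by (cases n) auto
  have "(\<Sum>k=1..n. (-1) ^ (n - k) * int (\<Sum>l=1..k. Lah k l) * int (Stirling n k))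
      = (\<Sum>k=1..n. \<Sum>l\<le>n. (-1) ^ (n - k) * int (Stirling n k) * int (Lah_rec k l))"
  proof (rule sum.cong[OF refl])
    fix k assume k: "k \<in> {1..n}"
    then have "(\<Sum>l=1..k. Lah k l) = (\<Sum>l\<le>n. Lah_rec k l)"
      by (intro sum_Lah_eq_sum_Lah_rec) auto
    then show "(-1) ^ (n - k) * int (\<Sum>l=1..k. Lah k l) * int (Stirling n k)
        = (\<Sum>l\<le>n. (-1) ^ (n - k) * int (Stirling n k) * int (Lah_rec k l))"
      by (simp add: sum_distrib_left sum_distrib_right algebra_simps)
  qed
  also have "\<dots> = (\<Sum>k\<le>n. \<Sum>l\<le>n. (-1) ^ (n - k) * int (Stirling n k) * int (Lah_rec k l))"
    using Stirling_n_0 by (simp add: atLeast0AtMost[symmetric] sum.atLeast_Suc_atMost[of 0])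
  also have "\<dots> = (\<Sum>l\<le>n. alt_Stirling_Lah n l)"
    unfolding alt_Stirling_Lah_def by (rule sum.swap)
  also have "\<dots> = int (Bell n)"
    by (simp add: alt_Stirling_Lah_eq_Stirling Bell_eq_sum_Stirling)
  finally show ?thesis ..
qed

end
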